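(* Let $n\ge 2$ and $N\ge 2n+1$ be integers and let $\alpha_2,\dots,\alpha_n$ be real coupling constants. Consider the Lovelock field equations $\sum_{i=1}^{n}\alpha_i\,{}^{(i)}\mathcal{H}^{a}_{\ b}=T^{a}_{\ b}$ (with $\alpha_1=1$) for the spatially flat ($k=0$) $N$-dimensional metric $ds^2=-dt^2+a(t)^2\left(dr^2+r^2d\Omega_{N-2}^2\right)$ in vacuum ($\rho=p=0$). Then every real constant $C$ which is a root of the polynomial equation $$\frac12(N-2)(N-1)H^2-\sum_{i=2}^{n}\alpha_i\,{}^{(i)}k_{21}\,H^{2i}=0$$ gives a solution of these vacuum field equations with constant Hubble rate $H=\dot a/a=C$ (i.e. $a(t)=a_0e^{Ct}$, $a_0>0$); these are (anti-)de Sitter type solutions, and the constant $C$ depends on $N$, $n$ and the $\alpha_i$.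
   Context: Units $c=8\pi G=1$; coordinates $(t,r,\phi_1,\dots,\phi_{N-2})$, $d\Omega_{N-2}^2$ the round metric on the unit $(N-2)$-sphere. Riemann tensor convention: $R^a_{\ bcd}=\Gamma^a_{bd,c}-\Gamma^a_{bc,d}+\Gamma^a_{fc}\Gamma^f_{bd}-\Gamma^a_{fd}\Gamma^f_{bc}$. For an integer $m\ge1$ define $Q^{(m)ab}_{\ \ \ \ cd}=2^{-m}\,\delta^{a b a_2 b_2\cdots a_m b_m}_{c d c_2 d_2\cdots c_m d_m}R_{a_2b_2}^{\ \ \ c_2d_2}\cdots R_{a_mb_m}^{\ \ \ c_md_m}$ (generalized Kronecker delta; for $m=1$ this is $\tfrac12\delta^{ab}_{cd}$), the generalized Riemann tensor ${}^{(m)}\mathcal{R}_{abcd}=Q^{(m)\ \ mn}_{ab}R_{mncd}$, generalized Ricci tensor ${}^{(m)}\mathcal{R}_{ab}=g^{cd}\,{}^{(m)}\mathcal{R}_{cadb}$, scalar ${}^{(m)}\mathcal{R}=g^{ab}\,{}^{(m)}\mathcal{R}_{ab}$, and the order-$m$ Lovelock tensor ${}^{(m)}\mathcal{H}_{ab}=m\,{}^{(m)}\mathcal{R}_{ab}-\tfrac12\,{}^{(m)}\mathcal{R}\,g_{ab}$. Matter is a perfect fluid with $T^0_{\ 0}=-\rho$, $T^j_{\ j}=p$ for spatial $j$. The coefficient is ${}^{(i)}k_{21}=-\tfrac12\,(2(i-1))!\,(N-1)(N-2)\binom{N-3}{2(i-1)}$. *)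

theory Defs
  imports "HOL-Analysis.Analysis" "HOL-Combinatorics.Permutations"
begin

text \<open>Coordinates x 0 = t, x 1, ..., x (N-1) spatial; a point is a function nat => real,
  only the coordinates below N matter. A metric assigns to each point the matrix g_ab
  (indices below N; entries with an index >= N are 0).\<close>

type_synonym point = "nat \<Rightarrow> real"
type_synonym metric = "point \<Rightarrow> nat \<Rightarrow> nat \<Rightarrow> real"

definition pd :: "(point \<Rightarrow> real) \<Rightarrow> nat \<Rightarrow> point \<Rightarrow> real" where
  "pd f i x = deriv (\<lambda>s. f (x(i := s))) (x i)"

definition minv :: "nat \<Rightarrow> (nat \<Rightarrow> nat \<Rightarrow> real) \<Rightarrow> nat \<Rightarrow> nat \<Rightarrow> real" where
  "minv N M = (THE h. (\<forall>a<N. \<forall>b<N. (\<Sum>c<N. M a c * h c b) = (if a = b then 1 else 0))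
                    \<and> (\<forall>a b. \<not> (a < N \<and> b < N) \<longrightarrow> h a b = 0))"

definition ginv :: "nat \<Rightarrow> metric \<Rightarrow> point \<Rightarrow> nat \<Rightarrow> nat \<Rightarrow> real" where
  "ginv N g x = minv N (g x)"

definition christ :: "nat \<Rightarrow> metric \<Rightarrow> nat \<Rightarrow> nat \<Rightarrow> nat \<Rightarrow> point \<Rightarrow> real" where
  "christ N g a b c x = (\<Sum>d<N. ginv N g x a d *
      (pd (\<lambda>y. g y d c) b x + pd (\<lambda>y. g y d b) c x - pd (\<lambda>y. g y b c) d x)) / 2"

definition riem :: "nat \<Rightarrow> metric \<Rightarrow> nat \<Rightarrow> nat \<Rightarrow> nat \<Rightarrow> nat \<Rightarrow> point \<Rightarrow> real" where
  "riem N g a b c d x = pd (\<lambda>y. christ N g a b d y) c x - pd (\<lambda>y. christ N g a b c y) d x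
     + (\<Sum>f<N. christ N g a f c x * christ N g f b d x - christ N g a f d x * christ N g f b c x)"

definition riem_low :: "nat \<Rightarrow> metric \<Rightarrow> nat \<Rightarrow> nat \<Rightarrow> nat \<Rightarrow> nat \<Rightarrow> point \<Rightarrow> real" where
  "riem_low N g a b c d x = (\<Sum>e<N. g x a e * riem N g e b c d x)"

definition riem_ud :: "nat \<Rightarrow> metric \<Rightarrow> nat \<Rightarrow> nat \<Rightarrow> nat \<Rightarrow> nat \<Rightarrow> point \<Rightarrow> real" where
  "riem_ud N g a b c d x = (\<Sum>e<N. \<Sum>f<N. riem_low N g a b e f x * ginv N g x e c * ginv N g x f d)"

text \<open>Generalized Kronecker delta with p upper indices up 0..p-1 and p lower indices lo 0..p-1:
  the determinant of the p x p matrix of Kronecker deltas.\<close>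
definition gdelta :: "nat \<Rightarrow> (nat \<Rightarrow> nat) \<Rightarrow> (nat \<Rightarrow> nat) \<Rightarrow> real" where
  "gdelta p up lo = (\<Sum>\<sigma> | \<sigma> permutes {..<p}.
       of_int (sign \<sigma>) * (\<Prod>i<p. if up i = lo (\<sigma> i) then 1 else 0))"

definition ext2 :: "nat \<Rightarrow> nat \<Rightarrow> (nat \<Rightarrow> nat) \<Rightarrow> nat \<Rightarrow> nat" where
  "ext2 a b u = (\<lambda>i. if i = 0 then a else if i = 1 then b else u (i - 2))"

text \<open>Q^(m)ab_cd = 2^-m delta^{a b a2 b2 ... am bm}_{c d c2 d2 ... cm dm} R_{a2 b2}^{c2 d2} ... R_{am bm}^{cm dm},
  with a_{j+2} = u (2j), b_{j+2} = u (2j+1), c_{j+2} = l (2j), d_{j+2} = l (2j+1).\<close>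
definition lovQ :: "nat \<Rightarrow> metric \<Rightarrow> nat \<Rightarrow> nat \<Rightarrow> nat \<Rightarrow> nat \<Rightarrow> nat \<Rightarrow> point \<Rightarrow> real" where
  "lovQ N g m a b c d x = (1 / 2 ^ m) *
     (\<Sum>u\<in>PiE {..<2*(m-1)} (\<lambda>_. {..<N}). \<Sum>l\<in>PiE {..<2*(m-1)} (\<lambda>_. {..<N}).
        gdelta (2*m) (ext2 a b u) (ext2 c d l) *
        (\<Prod>j<m-1. riem_ud N g (u (2*j)) (u (2*j+1)) (l (2*j)) (l (2*j+1)) x))"

definition lovQ_du :: "nat \<Rightarrow> metric \<Rightarrow> nat \<Rightarrow> nat \<Rightarrow> nat \<Rightarrow> nat \<Rightarrow> nat \<Rightarrow> point \<Rightarrow> real" where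
  "lovQ_du N g m a b p q x = (\<Sum>e<N. \<Sum>f<N. \<Sum>k<N. \<Sum>l<N.
      g x a e * g x b f * lovQ N g m e f k l x * ginv N g x k p * ginv N g x l q)"

definition genRiem :: "nat \<Rightarrow> metric \<Rightarrow> nat \<Rightarrow> nat \<Rightarrow> nat \<Rightarrow> nat \<Rightarrow> nat \<Rightarrow> point \<Rightarrow> real" where
  "genRiem N g m a b c d x = (\<Sum>p<N. \<Sum>q<N. lovQ_du N g m a b p q x * riem_low N g p q c d x)"

definition genRic :: "nat \<Rightarrow> metric \<Rightarrow> nat \<Rightarrow> nat \<Rightarrow> nat \<Rightarrow> point \<Rightarrow> real" where
  "genRic N g m a b x = (\<Sum>c<N. \<Sum>d<N. ginv N g x c d * genRiem N g m c a d b x)"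

definition genScal :: "nat \<Rightarrow> metric \<Rightarrow> nat \<Rightarrow> point \<Rightarrow> real" where
  "genScal N g m x = (\<Sum>a<N. \<Sum>b<N. ginv N g x a b * genRic N g m a b x)"

definition lovH :: "nat \<Rightarrow> metric \<Rightarrow> nat \<Rightarrow> nat \<Rightarrow> nat \<Rightarrow> point \<Rightarrow> real" where
  "lovH N g m a b x = real m * genRic N g m a b x - genScal N g m x * g x a b / 2"

definition lovH_mixed :: "nat \<Rightarrow> metric \<Rightarrow> nat \<Rightarrow> nat \<Rightarrow> nat \<Rightarrow> point \<Rightarrow> real" where
  "lovH_mixed N g m a b x = (\<Sum>c<N. ginv N g x a c * lovH N g m c b x)"

text \<open>Spatially flat FRW metric -dt^2 + A(t)^2 (dx_1^2 + ... + dx_{N-1}^2)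
  (the k = 0 metric written in Cartesian spatial coordinates).\<close>
definition frw :: "nat \<Rightarrow> (real \<Rightarrow> real) \<Rightarrow> metric" where
  "frw N A x a b = (if a < N \<and> b < N \<and> a = b then (if a = 0 then -1 else (A (x 0))\<^sup>2) else 0)"

definition k21 :: "nat \<Rightarrow> nat \<Rightarrow> real" where
  "k21 N i = - (1/2) * fact (2*(i-1)) * (real N - 1) * (real N - 2)
              * real ((N - 3) choose (2*(i-1)))"

end

theory Submission
  imports Defs
begin

text \<open>
  The de Sitter metric with scale factor a0 e^(C t) has constant curvature,
  R_abcd = C^2 (g_ac g_bd - g_ad g_bc). For any metric of constant curvature K the mixed
  Riemann tensor is K delta^ab_cd, so Q^(m) contracts the generalized Kronecker delta against
  m - 1 antisymmetrized deltas. A term survives only if each summed lower index pair is the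
  corresponding upper pair, possibly swapped, and the antisymmetry of the generalized delta
  turns this into a factor 2 per pair; the summed upper indices must moreover be distinct and
  avoid a and b, and counting them gives
  Q^(m)ab_cd = K^(m-1) (N-2)(N-3)...(N-2m+1) delta^ab_cd / 2.
  Contracting further, every Lovelock tensor is a multiple of the identity,
  (m)H^a_b = (m)k_21 K^m delta^a_b, and with K = C^2 the vacuum field equations become the
  given polynomial equation in C.
\<close>

section \<open>Generalized Kronecker deltas\<close>

lemma prod_if_one_zero:
  "finite S \<Longrightarrow> (\<Prod>i\<in>S. if P i then 1 else 0 :: 'a :: comm_semiring_1) = (if \<forall>i\<in>S. P i then 1 else 0)"
  by (induction S rule: finite_induct) auto

lemma gdelta_eq_sum_if:
  "gdelta p up lo = (\<Sum>\<sigma> | \<sigma> permutes {..<p}.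
     of_int (sign \<sigma>) * (if \<forall>i<p. up i = lo (\<sigma> i) then 1 else 0))"
  unfolding gdelta_def by (simp add: prod_if_one_zero Ball_def)

lemma gdelta_commute: "gdelta p up lo = gdelta p lo up"
proof -
  have "gdelta p up lo = (\<Sum>\<sigma> | \<sigma> permutes {..<p}.
          of_int (sign (inv \<sigma>)) * (if \<forall>i<p. up i = lo (inv \<sigma> i) then 1 else 0))"
    unfolding gdelta_eq_sum_if by (rule sum_permutations_inverse)
  also have "\<dots> = gdelta p lo up"
    unfolding gdelta_eq_sum_if
  proof (intro sum.cong refl)
    fix \<sigma> assume "\<sigma> \<in> {\<sigma>. \<sigma> permutes {..<p}}"
    then have \<sigma>: "\<sigma> permutes {..<p}" by simp
    have "(\<forall>i<p. up i = lo (inv \<sigma> i)) \<longleftrightarrow> (\<forall>i<p. lo i = up (\<sigma> i))"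
      by (metis \<sigma> lessThan_iff permutes_in_image permutes_inv permutes_inverses)
    moreover have "sign (inv \<sigma>) = sign \<sigma>"
      using \<sigma> permutation_permutes sign_inverse by blast
    ultimately show "of_int (sign (inv \<sigma>)) * (if \<forall>i<p. up i = lo (inv \<sigma> i) then 1 else 0)
        = of_int (sign \<sigma>) * (if \<forall>i<p. lo i = up (\<sigma> i) then 1 else 0 :: real)"
      by simp
  qed
  finally show ?thesis .
qed

lemma gdelta_permute_lower:
  assumes \<tau>: "\<tau> permutes {..<p}"
  shows "gdelta p up (lo \<circ> \<tau>) = of_int (sign \<tau>) * gdelta p up lo"
proof -
  have sign_comp: "sign (\<tau> \<circ> \<sigma>) = sign \<tau> * sign \<sigma>" if "\<sigma> permutes {..<p}" for \<sigma>
    using \<tau> that by (meson finite_lessThan permutation_permutes sign_compose)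
  have "gdelta p up lo = (\<Sum>\<sigma> | \<sigma> permutes {..<p}.
       of_int (sign (\<tau> \<circ> \<sigma>)) * (\<Prod>i<p. if up i = lo (\<tau> (\<sigma> i)) then 1 else 0))"
    unfolding gdelta_def using setum_permutations_compose_left[OF \<tau>] by (simp add: o_def)
  also have "\<dots> = of_int (sign \<tau>) * gdelta p up (lo \<circ> \<tau>)"
    unfolding gdelta_def sum_distrib_left by (intro sum.cong refl) (simp add: sign_comp)
  finally have "gdelta p up lo = of_int (sign \<tau>) * gdelta p up (lo \<circ> \<tau>)" .
  then show ?thesis
    by (metis mult.assoc mult_1 of_int_1 of_int_mult sign_idempotent)
qed

lemma gdelta_eq_0_if_not_inj_lower:
  assumes "\<not> inj_on lo {..<p}"
  shows "gdelta p up lo = 0"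
proof -
  obtain i j where ij: "i < p" "j < p" "i \<noteq> j" "lo i = lo j"
    using assms unfolding inj_on_def by blast
  then have "lo \<circ> Transposition.transpose i j = lo"
    by (auto simp: fun_eq_iff Transposition.transpose_def)
  then have "gdelta p up lo = - gdelta p up lo"
    using gdelta_permute_lower[of "Transposition.transpose i j" p up lo] ij
    by (simp add: permutes_swap_id sign_swap_id)
  then show ?thesis by simp
qed

lemma gdelta_eq_0_if_not_inj_upper:
  "\<not> inj_on up {..<p} \<Longrightarrow> gdelta p up lo = 0"
  by (metis gdelta_commute gdelta_eq_0_if_not_inj_lower)

lemma gdelta_cong_lower:
  assumes "\<And>i. i < p \<Longrightarrow> lo i = lo' i"
  shows "gdelta p up lo = gdelta p up lo'"
  unfolding gdelta_def using assms permutes_in_image[of _ "{..<p}"]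
  by (intro sum.cong prod.cong refl arg_cong2[where f = "(*)"]) auto

definition delta2 :: "nat \<Rightarrow> nat \<Rightarrow> nat \<Rightarrow> nat \<Rightarrow> real" where
  "delta2 a b c d = (if a = c \<and> b = d then 1 else 0) - (if a = d \<and> b = c then 1 else 0)"

lemma delta2_same_upper: "delta2 a a c d = 0"
  by (auto simp: delta2_def)

lemma inj_on_ext2_iff:
  "inj_on (ext2 a b u) {..<q+2} \<longleftrightarrow> a \<noteq> b \<and> (\<forall>i<q. u i \<noteq> a \<and> u i \<noteq> b) \<and> inj_on u {..<q}"
proof
  assume inj: "inj_on (ext2 a b u) {..<q+2}"
  have "a \<noteq> b" using inj_onD[OF inj, of 0 1] by (auto simp: ext2_def)
  moreover have "u i \<noteq> a \<and> u i \<noteq> b" if "i < q" for i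
    using inj_onD[OF inj, of "i+2" 0] inj_onD[OF inj, of "i+2" 1] that by (auto simp: ext2_def)
  moreover have "inj_on u {..<q}"
    using inj_onD[OF inj, of "_+2" "_+2"] by (auto simp: ext2_def intro!: inj_onI)
  ultimately show "a \<noteq> b \<and> (\<forall>i<q. u i \<noteq> a \<and> u i \<noteq> b) \<and> inj_on u {..<q}" by blast
next
  assume h: "a \<noteq> b \<and> (\<forall>i<q. u i \<noteq> a \<and> u i \<noteq> b) \<and> inj_on u {..<q}"
  show "inj_on (ext2 a b u) {..<q+2}"
  proof (rule inj_onI)
    fix i j assume i: "i \<in> {..<q+2}" and j: "j \<in> {..<q+2}" and eq: "ext2 a b u i = ext2 a b u j"
    consider "i < 2" "j < 2" | "i < 2" "j \<ge> 2" | "i \<ge> 2" "j < 2" | "i \<ge> 2" "j \<ge> 2" by linarith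
    then show "i = j"
    proof cases
      case 4
      then have "u (i - 2) = u (j - 2)" using eq by (simp add: ext2_def)
      then have "i - 2 = j - 2" using h i j 4 by (auto dest: inj_onD)
      then show ?thesis using 4 by simp
    qed (use h i j eq in \<open>auto simp: ext2_def less_2_cases_iff split: if_splits
             dest!: spec[of _ "i - 2"] spec[of _ "j - 2"]\<close>)
  qed
qed

lemma permutation_matching_ext2:
  assumes \<sigma>: "\<sigma> permutes {..<q+2}" and inj: "inj_on (ext2 c d u) {..<q+2}"
    and match: "\<forall>i<q+2. ext2 a b u i = ext2 c d u (\<sigma> i)"
  shows "\<sigma> = id \<or> \<sigma> = Transposition.transpose 0 1"
proof -
  have "\<sigma> i = i" if i: "i \<in> {..<q+2} - {0, 1}" for i
  proof -
    have "ext2 c d u (\<sigma> i) = ext2 c d u i"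
      using match i by (auto simp: ext2_def)
    then show ?thesis
      using inj i permutes_in_image[OF \<sigma>] by (auto dest: inj_onD)
  qed
  then have "\<sigma> permutes {0, 1}"
    by (rule permutes_superset[OF \<sigma>])
  then show ?thesis by (simp add: permutes_doubleton_iff)
qed

lemma gdelta_ext2_of_inj:
  assumes inj: "inj_on (ext2 c d u) {..<q+2}"
  shows "gdelta (q+2) (ext2 a b u) (ext2 c d u) = delta2 a b c d"
proof -
  let ?match = "\<lambda>\<sigma>. \<forall>i<q+2. ext2 a b u i = ext2 c d u (\<sigma> i)"
  let ?f = "\<lambda>\<sigma>. of_int (sign \<sigma>) * (if ?match \<sigma> then 1 else 0) :: real"
  let ?T = "Transposition.transpose (0::nat) 1"
  have "gdelta (q+2) (ext2 a b u) (ext2 c d u) = sum ?f {\<sigma>. \<sigma> permutes {..<q+2}}"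
    by (simp add: gdelta_eq_sum_if)
  also have "\<dots> = sum ?f {id, ?T}"
    using permutation_matching_ext2[OF _ inj] finite_permutations[of "{..<q+2}"]
    by (intro sum.mono_neutral_right) (auto simp: permutes_swap_id)
  also have "\<dots> = ?f id + ?f ?T"
    by (subst sum.insert) (auto simp: fun_eq_iff Transposition.transpose_def)
  also have "\<dots> = delta2 a b c d"
  proof -
    have "?match id \<longleftrightarrow> a = c \<and> b = d" "?match ?T \<longleftrightarrow> a = d \<and> b = c"
      by (auto simp: ext2_def Transposition.transpose_def dest: spec[of _ 0] spec[of _ 1])
    then show ?thesis by (simp add: delta2_def sign_swap_id)
  qed
  finally show ?thesis .
qed

lemma gdelta_ext2_same_tail:
  "gdelta (q+2) (ext2 a b u) (ext2 c d u) = (if inj_on (ext2 a b u) {..<q+2} then delta2 a b c d else 0)"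
proof (cases "inj_on (ext2 a b u) {..<q+2}")
  case inj_ab: True
  show ?thesis
  proof (cases "inj_on (ext2 c d u) {..<q+2}")
    case True
    then show ?thesis using inj_ab gdelta_ext2_of_inj by simp
  next
    case False
    then have "delta2 a b c d = 0"
      using inj_ab unfolding inj_on_ext2_iff by (auto simp: delta2_def)
    then show ?thesis using False gdelta_eq_0_if_not_inj_lower by simp
  qed
qed (simp add: gdelta_eq_0_if_not_inj_upper)

definition swap_pairs :: "nat set \<Rightarrow> nat \<Rightarrow> nat" where
  "swap_pairs s i = (if i div 2 \<in> s then (if even i then Suc i else i - 1) else i)"

lemma swap_pairs_empty: "swap_pairs {} = id"
  by (simp add: fun_eq_iff swap_pairs_def)

lemma swap_pairs_insert:
  assumes "j \<notin> s"
  shows "swap_pairs (insert j s) = swap_pairs s \<circ> Transposition.transpose (2*j) (2*j+1)"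
proof
  fix i
  show "swap_pairs (insert j s) i = (swap_pairs s \<circ> Transposition.transpose (2*j) (2*j+1)) i"
  proof (cases "i div 2 = j")
    case True
    then have "i = 2*j \<or> i = 2*j+1" by auto
    then show ?thesis using assms by (auto simp: swap_pairs_def Transposition.transpose_def)
  next
    case False
    then have "i \<noteq> 2*j" "i \<noteq> 2*j+1" by auto
    then show ?thesis using False by (auto simp: swap_pairs_def Transposition.transpose_def)
  qed
qed

lemma swap_pairs_even_odd:
  "swap_pairs s (2*j) = (if j \<in> s then 2*j+1 else 2*j)"
  "swap_pairs s (Suc (2*j)) = (if j \<in> s then 2*j else Suc (2*j))"
  by (simp_all add: swap_pairs_def)

lemma swap_pairs_less:
  assumes "s \<subseteq> {..<k}" "i < 2*k"
  shows "swap_pairs s i < 2*k"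
  using assms by (auto simp: swap_pairs_def)

lemma ext2_comp_transpose:
  "ext2 c d (l \<circ> Transposition.transpose i j) = ext2 c d l \<circ> Transposition.transpose (i+2) (j+2)"
  by (auto simp: fun_eq_iff ext2_def Transposition.transpose_def)

lemma gdelta_swap_pairs_lower:
  assumes "s \<subseteq> {..<k}"
  shows "gdelta (2*k+2) up (ext2 c d (l \<circ> swap_pairs s)) = (-1)^card s * gdelta (2*k+2) up (ext2 c d l)"
proof -
  have "finite s" using assms finite_subset by blast
  then show ?thesis
    using assms
  proof (induction s rule: finite_induct)
    case (insert j s)
    have "Transposition.transpose (2*j+2) (2*j+1+2) permutes {..<2*k+2}"
      using insert.prems by (intro permutes_swap_id) auto
    then have "gdelta (2*k+2) up (ext2 c d (l \<circ> swap_pairs (insert j s)))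
        = - gdelta (2*k+2) up (ext2 c d (l \<circ> swap_pairs s))"
      using gdelta_permute_lower
      by (simp add: swap_pairs_insert[OF insert.hyps(2)] o_assoc ext2_comp_transpose sign_swap_id)
    with insert show ?case by (simp add: comp_def)
  qed (simp add: swap_pairs_empty)
qed

lemma all_less_double_iff: "(\<forall>j<k. P (2*j) \<and> P (2*j+1)) \<longleftrightarrow> (\<forall>i<2*k. P i)" for k :: nat
proof
  assume h: "\<forall>j<k. P (2*j) \<and> P (2*j+1)"
  show "\<forall>i<2*k. P i"
  proof (intro allI impI)
    fix i assume "i < 2*k"
    then have "i div 2 < k" by simp
    moreover have "i = 2*(i div 2) \<or> i = 2*(i div 2)+1" by auto
    ultimately show "P i" using h by metis
  qed
qed auto

lemma prod_delta2_eq_sum_swap_pairs: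
  "(\<Prod>j<k. delta2 (u (2*j)) (u (2*j+1)) (l (2*j)) (l (2*j+1)))
     = (\<Sum>s\<in>Pow {..<k}. (-1)^card s * (if \<forall>i<2*k. u (swap_pairs s i) = l i then 1 else 0))"
proof -
  define match where "match s j \<longleftrightarrow> u (swap_pairs s (2*j)) = l (2*j) \<and> u (swap_pairs s (2*j+1)) = l (2*j+1)"
    for s j
  let ?ind = "\<lambda>P. if P then 1 else 0 :: real"
  have "(\<Prod>j<k. delta2 (u (2*j)) (u (2*j+1)) (l (2*j)) (l (2*j+1)))
      = (\<Prod>j<k. - ?ind (match {j} j) + ?ind (match {} j))"
    by (intro prod.cong refl) (simp add: delta2_def match_def swap_pairs_even_odd conj_commute)
  also have "\<dots> = (\<Sum>s\<in>Pow {..<k}. (\<Prod>j\<in>s. - ?ind (match {j} j)) * (\<Prod>j\<in>{..<k}-s. ?ind (match {} j)))"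
    by (rule prod_add) simp
  also have "\<dots> = (\<Sum>s\<in>Pow {..<k}. (-1)^card s * ?ind (\<forall>i<2*k. u (swap_pairs s i) = l i))"
  proof (intro sum.cong refl)
    fix s assume "s \<in> Pow {..<k}"
    then have s: "s \<subseteq> {..<k}" by simp
    have "(\<Prod>j\<in>s. ?ind (match {j} j)) * (\<Prod>j\<in>{..<k}-s. ?ind (match {} j))
        = (\<Prod>j\<in>s. ?ind (match s j)) * (\<Prod>j\<in>{..<k}-s. ?ind (match s j))"
      by (intro arg_cong2[where f = "(*)"] prod.cong refl) (simp_all add: match_def swap_pairs_even_odd)
    also have "\<dots> = (\<Prod>j<k. ?ind (match s j))"
      using s by (metis finite_lessThan mult.commute prod.subset_diff)
    also have "\<dots> = ?ind (\<forall>i<2*k. u (swap_pairs s i) = l i)"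
      using all_less_double_iff[of k "\<lambda>i. u (swap_pairs s i) = l i"]
      by (simp add: prod_if_one_zero match_def Ball_def lessThan_iff)
    finally show "(\<Prod>j\<in>s. - ?ind (match {j} j)) * (\<Prod>j\<in>{..<k}-s. ?ind (match {} j))
        = (-1)^card s * ?ind (\<forall>i<2*k. u (swap_pairs s i) = l i)"
      by (simp add: prod_uminus)
  qed
  finally show ?thesis .
qed

lemma sum_gdelta_prod_delta2:
  assumes u: "u \<in> {..<2*k} \<rightarrow>\<^sub>E {..<N}"
  shows "(\<Sum>l\<in>{..<2*k} \<rightarrow>\<^sub>E {..<N}. gdelta (2*k+2) up (ext2 c d l)
            * (\<Prod>j<k. delta2 (u (2*j)) (u (2*j+1)) (l (2*j)) (l (2*j+1))))
       = 2^k * gdelta (2*k+2) up (ext2 c d u)"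
proof -
  let ?L = "{..<2*k} \<rightarrow>\<^sub>E {..<N}"
  let ?G = "\<lambda>l. gdelta (2*k+2) up (ext2 c d l)"
  let ?ind = "\<lambda>s l. if \<forall>i<2*k. u (swap_pairs s i) = l i then 1 else 0 :: real"
  have pick: "(\<Sum>l\<in>?L. ?G l * ?ind s l) = (-1)^card s * ?G u" if s: "s \<subseteq> {..<k}" for s
  proof -
    define l0 where "l0 = restrict (u \<circ> swap_pairs s) {..<2*k}"
    have l0: "l0 \<in> ?L"
      unfolding l0_def using u swap_pairs_less[OF s] by (auto simp: PiE_iff)
    have "(\<forall>i<2*k. u (swap_pairs s i) = l i) \<longleftrightarrow> l = l0" if l: "l \<in> ?L" for l
    proof
      assume "\<forall>i<2*k. u (swap_pairs s i) = l i"
      then show "l = l0" by (intro PiE_ext[OF l l0]) (simp add: l0_def)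
    qed (simp add: l0_def)
    then have "(\<Sum>l\<in>?L. ?G l * ?ind s l) = (\<Sum>l\<in>?L. if l = l0 then ?G l else 0)"
      by (intro sum.cong refl) auto
    also have "\<dots> = ?G l0"
      using l0 by (simp add: finite_PiE)
    also have "\<dots> = ?G (u \<circ> swap_pairs s)"
      by (rule gdelta_cong_lower) (auto simp: l0_def ext2_def)
    also have "\<dots> = (-1)^card s * ?G u"
      by (rule gdelta_swap_pairs_lower[OF s])
    finally show ?thesis .
  qed
  have "(\<Sum>l\<in>?L. ?G l * (\<Prod>j<k. delta2 (u (2*j)) (u (2*j+1)) (l (2*j)) (l (2*j+1))))
      = (\<Sum>l\<in>?L. \<Sum>s\<in>Pow {..<k}. (-1)^card s * (?G l * ?ind s l))"
    unfolding prod_delta2_eq_sum_swap_pairs sum_distrib_left by (simp add: mult.left_commute)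
  also have "\<dots> = (\<Sum>s\<in>Pow {..<k}. (-1)^card s * (\<Sum>l\<in>?L. ?G l * ?ind s l))"
    by (subst sum.swap) (simp add: sum_distrib_left)
  also have "\<dots> = (\<Sum>s\<in>Pow {..<k}. ?G u)"
    using pick by (intro sum.cong refl) simp
  also have "\<dots> = 2^k * ?G u"
    by (simp add: card_Pow)
  finally show ?thesis .
qed

definition falling_fact :: "nat \<Rightarrow> nat \<Rightarrow> nat" where
  "falling_fact n q = (\<Prod>j<q. n - j)"

lemma falling_fact_eq_fact_mult_choose: "falling_fact n q = fact q * (n choose q)"
proof (induction q)
  case (Suc q)
  have "(n - q) * (n choose q) = Suc q * (n choose Suc q)"
    using binomial_absorb_comp[of n q] binomial_absorption[of q n] by simp
  with Suc show ?case by (simp add: falling_fact_def algebra_simps)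
qed (simp add: falling_fact_def)

lemma card_inj_ext2:
  assumes "a < N" "b < N" "a \<noteq> b"
  shows "card {u \<in> {..<q} \<rightarrow>\<^sub>E {..<N}. inj_on (ext2 a b u) {..<q+2}} = falling_fact (N - 2) q"
proof -
  have "{u \<in> {..<q} \<rightarrow>\<^sub>E {..<N}. inj_on (ext2 a b u) {..<q+2}}
      = {u \<in> {..<q} \<rightarrow>\<^sub>E ({..<N} - {a, b}). inj_on u {..<q}}"
    unfolding inj_on_ext2_iff using assms by (auto simp: PiE_iff)
  moreover have "card ({..<N} - {a, b}) = N - 2"
    using assms by (simp add: card_Diff_subset)
  ultimately show ?thesis
    using card_inj_on_subset_funcset[of "{..<q}" "{..<N} - {a, b}" "{..<q}"]
    by (simp add: falling_fact_def atLeast0LessThan)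
qed

lemma lovQ_of_riem_ud_const:
  assumes R: "\<And>a b c d. a < N \<Longrightarrow> b < N \<Longrightarrow> c < N \<Longrightarrow> d < N \<Longrightarrow>
      riem_ud N g a b c d x = K * delta2 a b c d"
    and a: "a < N" and b: "b < N"
  shows "lovQ N g (Suc k) a b c d x = K^k * real (falling_fact (N - 2) (2*k)) / 2 * delta2 a b c d"
proof -
  let ?P = "{..<2*k} \<rightarrow>\<^sub>E {..<N}"
  let ?G = "\<lambda>u l. gdelta (2*k+2) (ext2 a b u) (ext2 c d l)"
  let ?D = "\<lambda>u l. \<Prod>j<k. delta2 (u (2*j)) (u (2*j+1)) (l (2*j)) (l (2*j+1))"
  have riem_prod: "(\<Prod>j<k. riem_ud N g (u (2*j)) (u (2*j+1)) (l (2*j)) (l (2*j+1)) x) = K^k * ?D u l"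
    if "u \<in> ?P" "l \<in> ?P" for u l
    using that by (simp add: R PiE_iff prod.distrib)
  have "lovQ N g (Suc k) a b c d x = (1 / 2^Suc k) * (\<Sum>u\<in>?P. \<Sum>l\<in>?P.
      ?G u l * (\<Prod>j<k. riem_ud N g (u (2*j)) (u (2*j+1)) (l (2*j)) (l (2*j+1)) x))"
    unfolding lovQ_def by simp
  also have "\<dots> = (1 / 2^Suc k) * (\<Sum>u\<in>?P. K^k * (\<Sum>l\<in>?P. ?G u l * ?D u l))"
    by (simp only: riem_prod sum_distrib_left mult.left_commute cong: sum.cong)
  also have "\<dots> = (1 / 2^Suc k) * (\<Sum>u\<in>?P. K^k * (2^k * ?G u u))"
    by (simp only: sum_gdelta_prod_delta2 cong: sum.cong)
  also have "\<dots> = K^k * (\<Sum>u\<in>?P. if inj_on (ext2 a b u) {..<2*k+2} then delta2 a b c d else 0) / 2"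
    by (simp only: gdelta_ext2_same_tail) (simp add: sum_distrib_left sum_divide_distrib[symmetric])
  also have "\<dots> = K^k * real (falling_fact (N - 2) (2*k)) / 2 * delta2 a b c d"
  proof (cases "a = b")
    case False
    then show ?thesis
      using card_inj_ext2[OF a b False, of "2*k"] by (simp add: sum.If_cases finite_PiE Collect_conj_eq)
  next
    case True
    then show ?thesis by (simp add: delta2_same_upper cong: if_cong)
  qed
  finally show ?thesis .
qed

section \<open>Lovelock tensors of a metric of constant curvature\<close>

lemma sum_delta2_mult:
  assumes "a < N" "b < N"
  shows "(\<Sum>p<N. \<Sum>q<N. delta2 a b p q * X p q) = X a b - X b a"
proof -
  have "(\<Sum>q<N. delta2 a b p q * X p q) = (if p = a then X a b else 0) - (if p = b then X b a else 0)" for p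
    unfolding delta2_def left_diff_distrib sum_subtractf using assms
    by (simp add: if_distrib[where f = "\<lambda>t. t * _"] sum.delta' cong: if_cong)
  then show ?thesis using assms by (simp add: sum_subtractf)
qed

locale constant_curvature_at =
  fixes N :: nat and g :: metric and x :: point and K :: real
  assumes metric_symmetric: "a < N \<Longrightarrow> b < N \<Longrightarrow> g x a b = g x b a"
    and metric_ginv: "a < N \<Longrightarrow> b < N \<Longrightarrow> (\<Sum>c<N. g x a c * ginv N g x c b) = (if a = b then 1 else 0)"
    and ginv_metric: "a < N \<Longrightarrow> b < N \<Longrightarrow> (\<Sum>c<N. ginv N g x a c * g x c b) = (if a = b then 1 else 0)"
    and riem_low_eq: "a < N \<Longrightarrow> b < N \<Longrightarrow> c < N \<Longrightarrow> d < N \<Longrightarrow>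
      riem_low N g a b c d x = K * (g x a c * g x b d - g x a d * g x b c)"
begin

lemma riem_ud_eq:
  assumes "a < N" "b < N" "c < N" "d < N"
  shows "riem_ud N g a b c d x = K * delta2 a b c d"
proof -
  let ?g = "g x" and ?h = "ginv N g x"
  have "riem_ud N g a b c d x = (\<Sum>e<N. \<Sum>f<N.
      K * ((?g a e * ?h e c) * (?g b f * ?h f d)) - K * ((?g b e * ?h e c) * (?g a f * ?h f d)))"
    unfolding riem_ud_def using assms by (intro sum.cong refl) (simp add: riem_low_eq algebra_simps)
  also have "\<dots> = K * ((\<Sum>e<N. ?g a e * ?h e c) * (\<Sum>f<N. ?g b f * ?h f d))
      - K * ((\<Sum>e<N. ?g b e * ?h e c) * (\<Sum>f<N. ?g a f * ?h f d))"
    by (simp only: sum_product) (simp only: sum_distrib_left sum_subtractf)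
  also have "\<dots> = K * delta2 a b c d"
    using assms by (simp add: metric_ginv) (simp add: delta2_def)
  finally show ?thesis .
qed

lemma lovQ_eq:
  "a < N \<Longrightarrow> b < N \<Longrightarrow>
    lovQ N g (Suc k) a b c d x = K^k * real (falling_fact (N - 2) (2*k)) / 2 * delta2 a b c d"
  by (rule lovQ_of_riem_ud_const[OF riem_ud_eq])

lemma lovQ_du_eq:
  assumes "a < N" "b < N" "p < N" "q < N"
  shows "lovQ_du N g (Suc k) a b p q x = K^k * real (falling_fact (N - 2) (2*k)) / 2 * delta2 a b p q"
proof -
  let ?g = "g x" and ?h = "ginv N g x" and ?Z = "K^k * real (falling_fact (N - 2) (2*k)) / 2"
  have "lovQ_du N g (Suc k) a b p q x
      = (\<Sum>e<N. \<Sum>f<N. ?Z * ?g a e * ?g b f * (?h e p * ?h f q - ?h f p * ?h e q))"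
    unfolding lovQ_du_def
  proof (intro sum.cong refl)
    fix e f assume "e \<in> {..<N}" "f \<in> {..<N}"
    then have "(\<Sum>k'<N. \<Sum>l<N. ?g a e * ?g b f * lovQ N g (Suc k) e f k' l x * ?h k' p * ?h l q)
        = (\<Sum>k'<N. \<Sum>l<N. delta2 e f k' l * (?Z * ?g a e * ?g b f * (?h k' p * ?h l q)))"
      by (intro sum.cong refl) (simp add: lovQ_eq algebra_simps)
    also have "\<dots> = ?Z * ?g a e * ?g b f * (?h e p * ?h f q - ?h f p * ?h e q)"
      by (rule trans[OF sum_delta2_mult]) (use \<open>e \<in> {..<N}\<close> \<open>f \<in> {..<N}\<close> in \<open>simp_all add: algebra_simps\<close>)
    finally show "(\<Sum>k'<N. \<Sum>l<N. ?g a e * ?g b f * lovQ N g (Suc k) e f k' l x * ?h k' p * ?h l q)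
        = ?Z * ?g a e * ?g b f * (?h e p * ?h f q - ?h f p * ?h e q)" .
  qed
  also have "\<dots> = ?Z * (\<Sum>e<N. \<Sum>f<N.
      (?g a e * ?h e p) * (?g b f * ?h f q) - (?g a e * ?h e q) * (?g b f * ?h f p))"
    by (simp add: sum_distrib_left algebra_simps diff_divide_distrib)
  also have "\<dots> = ?Z * ((\<Sum>e<N. ?g a e * ?h e p) * (\<Sum>f<N. ?g b f * ?h f q)
      - (\<Sum>e<N. ?g a e * ?h e q) * (\<Sum>f<N. ?g b f * ?h f p))"
    by (simp only: sum_product sum_subtractf)
  also have "\<dots> = ?Z * delta2 a b p q"
    using assms by (simp add: metric_ginv) (simp add: delta2_def)
  finally show ?thesis .
qed

lemma ginv_metric_trace: "(\<Sum>c<N. \<Sum>d<N. ginv N g x c d * g x c d) = N"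
proof -
  have "(\<Sum>c<N. \<Sum>d<N. ginv N g x c d * g x c d) = (\<Sum>d<N. \<Sum>c<N. g x d c * ginv N g x c d)"
    by (subst sum.swap) (simp add: metric_symmetric mult.commute)
  also have "\<dots> = N"
    by (simp add: metric_ginv)
  finally show ?thesis .
qed

lemma ginv_metric_contract:
  assumes "a < N" "b < N"
  shows "(\<Sum>c<N. \<Sum>d<N. ginv N g x c d * g x c b * g x a d) = g x a b"
proof -
  have "(\<Sum>c<N. \<Sum>d<N. ginv N g x c d * g x c b * g x a d)
      = (\<Sum>d<N. (\<Sum>c<N. g x b c * ginv N g x c d) * g x a d)"
    using assms by (subst sum.swap) (simp add: metric_symmetric sum_distrib_left sum_distrib_right mult_ac)
  also have "\<dots> = g x a b"
    using assms by (simp add: metric_ginv if_distrib[where f = "\<lambda>t. t * _"] sum.delta cong: if_cong)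
  finally show ?thesis .
qed

lemma genRiem_eq:
  assumes "a < N" "b < N" "c < N" "d < N"
  shows "genRiem N g (Suc k) a b c d x
    = K^Suc k * real (falling_fact (N - 2) (2*k)) * (g x a c * g x b d - g x a d * g x b c)"
proof -
  let ?Z = "K^k * real (falling_fact (N - 2) (2*k)) / 2"
  have "genRiem N g (Suc k) a b c d x = ?Z * (\<Sum>p<N. \<Sum>q<N. delta2 a b p q * riem_low N g p q c d x)"
    unfolding genRiem_def sum_distrib_left using assms
    by (intro sum.cong refl) (simp add: lovQ_du_eq mult.assoc)
  also have "\<dots> = ?Z * (riem_low N g a b c d x - riem_low N g b a c d x)"
    using assms by (simp only: sum_delta2_mult)
  also have "\<dots> = K^Suc k * real (falling_fact (N - 2) (2*k)) * (g x a c * g x b d - g x a d * g x b c)"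
    using assms by (simp add: riem_low_eq field_simps)
  finally show ?thesis .
qed

lemma genRic_eq:
  assumes "a < N" "b < N"
  shows "genRic N g (Suc k) a b x = K^Suc k * real (falling_fact (N - 2) (2*k)) * (real N - 1) * g x a b"
proof -
  let ?W = "K^Suc k * real (falling_fact (N - 2) (2*k))"
  have "genRic N g (Suc k) a b x = (\<Sum>c<N. \<Sum>d<N.
      ?W * (ginv N g x c d * g x c d) * g x a b - ?W * (ginv N g x c d * g x c b * g x a d))"
    unfolding genRic_def using assms by (intro sum.cong refl) (simp add: genRiem_eq algebra_simps)
  also have "\<dots> = ?W * (\<Sum>c<N. \<Sum>d<N. ginv N g x c d * g x c d) * g x a b
      - ?W * (\<Sum>c<N. \<Sum>d<N. ginv N g x c d * g x c b * g x a d)"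
    by (simp add: sum_subtractf sum_distrib_left sum_distrib_right)
  also have "\<dots> = ?W * (real N - 1) * g x a b"
    using assms by (simp only: ginv_metric_trace ginv_metric_contract) (simp add: algebra_simps)
  finally show ?thesis .
qed

lemma genScal_eq:
  "genScal N g (Suc k) x = K^Suc k * real (falling_fact (N - 2) (2*k)) * (real N - 1) * real N"
proof -
  have "genScal N g (Suc k) x = K^Suc k * real (falling_fact (N - 2) (2*k)) * (real N - 1)
      * (\<Sum>a<N. \<Sum>b<N. ginv N g x a b * g x a b)"
    unfolding genScal_def sum_distrib_left by (intro sum.cong refl) (simp add: genRic_eq mult_ac)
  then show ?thesis by (simp add: ginv_metric_trace)
qed

lemma lovH_mixed_eq:
  assumes "a < N" "b < N"
  shows "lovH_mixed N g (Suc k) a b x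
    = K^Suc k * real (falling_fact (N - 2) (2*k)) * (real N - 1) * (real (Suc k) - real N / 2)
      * (if a = b then 1 else 0)"
proof -
  let ?V = "K^Suc k * real (falling_fact (N - 2) (2*k)) * (real N - 1) * (real (Suc k) - real N / 2)"
  have "lovH_mixed N g (Suc k) a b x = ?V * (\<Sum>c<N. ginv N g x a c * g x c b)"
    unfolding lovH_mixed_def lovH_def sum_distrib_left using assms
    by (intro sum.cong refl) (simp add: genRic_eq genScal_eq field_simps)
  then show ?thesis using assms by (simp add: ginv_metric)
qed

end


lemma lovelock_coeff_eq_k21:
  assumes "2 * Suc k \<le> N"
  shows "real (falling_fact (N - 2) (2*k)) * (real N - 1) * (real (Suc k) - real N / 2) = k21 N (Suc k)"
proof -
  have "(N - 2 - 2*k) * ((N - 2) choose (2*k)) = (N - 2) * ((N - 3) choose (2*k))"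
    using binomial_absorb_comp[of "N - 2" "2*k"] by (simp add: numeral_3_eq_3)
  from arg_cong[where f = real, OF this]
  have absorb: "(real N - 2 - 2*k) * ((N - 2) choose (2*k)) = (real N - 2) * ((N - 3) choose (2*k))"
    using assms by (simp add: of_nat_diff diff_diff_eq)
  have "real (falling_fact (N - 2) (2*k)) * (real N - 1) * (real (Suc k) - real N / 2)
      = -(1/2) * fact (2*k) * (real N - 1) * ((real N - 2 - 2*k) * ((N - 2) choose (2*k)))"
    by (simp add: falling_fact_eq_fact_mult_choose field_simps)
  also have "\<dots> = k21 N (Suc k)"
    unfolding absorb k21_def by simp
  finally show ?thesis .
qed

section \<open>The spatially flat FRW metric\<close>

lemma sum_diagonal_mult:
  fixes M :: "nat \<Rightarrow> nat \<Rightarrow> real"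
  assumes "\<And>c. c \<noteq> a \<Longrightarrow> M a c = 0"
  shows "(\<Sum>c<N. M a c * Y c) = (if a < N then M a a * Y a else 0)"
proof -
  have "(\<Sum>c<N. M a c * Y c) = (\<Sum>c<N. if c = a then M a a * Y a else 0)"
    using assms by (intro sum.cong refl) auto
  then show ?thesis by simp
qed

lemma minv_eqI:
  assumes right: "\<And>a b. a < N \<Longrightarrow> b < N \<Longrightarrow> (\<Sum>c<N. M a c * h c b) = (if a = b then 1 else 0)"
    and left: "\<And>a b. a < N \<Longrightarrow> b < N \<Longrightarrow> (\<Sum>c<N. h a c * M c b) = (if a = b then 1 else 0)"
    and outside: "\<And>a b. \<not> (a < N \<and> b < N) \<Longrightarrow> h a b = 0"
  shows "minv N M = h"
  unfolding minv_def
proof (rule the_equality)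
  fix h' assume h': "(\<forall>a<N. \<forall>b<N. (\<Sum>c<N. M a c * h' c b) = (if a = b then 1 else 0))
    \<and> (\<forall>a b. \<not> (a < N \<and> b < N) \<longrightarrow> h' a b = 0)"
  show "h' = h"
  proof (intro ext)
    fix a b
    show "h' a b = h a b"
    proof (cases "a < N \<and> b < N")
      case True
      then have "h a b = (\<Sum>d<N. h a d * (if d = b then 1 else 0))"
        by (simp add: if_distrib[where f = "\<lambda>t. _ * t"] cong: if_cong)
      also have "\<dots> = (\<Sum>d<N. h a d * (\<Sum>c<N. M d c * h' c b))"
        using h' True by simp
      also have "\<dots> = (\<Sum>c<N. (\<Sum>d<N. h a d * M d c) * h' c b)"
        by (simp only: sum_distrib_left sum_distrib_right mult.assoc) (rule sum.swap)
      also have "\<dots> = h' a b"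
        using True left by (simp add: if_distrib[where f = "\<lambda>t. t * _"] cong: if_cong)
      finally show ?thesis by simp
    qed (use h' outside in simp)
  qed
qed (use right outside in blast)

lemma frw_symmetric: "frw N A x a b = frw N A x b a"
  by (auto simp: frw_def)

definition frw_inv :: "nat \<Rightarrow> (real \<Rightarrow> real) \<Rightarrow> point \<Rightarrow> nat \<Rightarrow> nat \<Rightarrow> real" where
  "frw_inv N A x a b = (if a < N \<and> b < N \<and> a = b then (if a = 0 then -1 else 1 / (A (x 0))^2) else 0)"

lemma frw_mult_frw_inv:
  assumes "A (x 0) \<noteq> 0" "a < N" "b < N"
  shows "(\<Sum>c<N. frw N A x a c * frw_inv N A x c b) = (if a = b then 1 else 0)"
  using assms by (subst sum_diagonal_mult) (auto simp: frw_def frw_inv_def)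

lemma frw_inv_mult_frw:
  assumes "A (x 0) \<noteq> 0" "a < N" "b < N"
  shows "(\<Sum>c<N. frw_inv N A x a c * frw N A x c b) = (if a = b then 1 else 0)"
  using assms by (subst sum_diagonal_mult) (auto simp: frw_def frw_inv_def)

lemma ginv_frw:
  assumes "A (x 0) \<noteq> 0"
  shows "ginv N (frw N A) x = frw_inv N A x"
  unfolding ginv_def using assms
  by (intro minv_eqI) (simp_all add: frw_mult_frw_inv frw_inv_mult_frw, auto simp: frw_inv_def)

lemma pd_frw:
  "pd (\<lambda>y. frw N A y a b) i x
    = (if i = 0 \<and> a < N \<and> b < N \<and> a = b \<and> a \<noteq> 0 then deriv (\<lambda>t. (A t)^2) (x 0) else 0)"
proof (cases "a < N \<and> b < N \<and> a = b \<and> a \<noteq> 0")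
  case True
  then have "(\<lambda>y. frw N A y a b) = (\<lambda>y. (A (y 0))^2)"
    by (auto simp: frw_def)
  then show ?thesis
    using True by (cases "i = 0") (simp_all add: pd_def)
next
  case False
  then have "(\<lambda>y. frw N A y a b) = (\<lambda>y. if a < N \<and> b < N \<and> a = b then -1 else 0)"
    by (auto simp: frw_def)
  then show ?thesis
    using False by (auto simp: pd_def)
qed

lemma christ_frw:
  assumes "A (y 0) \<noteq> 0" "a < N" "b < N" "c < N"
  shows "christ N (frw N A) a b c y = deriv (\<lambda>t. (A t)^2) (y 0) / 2 *
    (if a = 0 then (if b = c \<and> b \<noteq> 0 then 1 else 0)
     else ((if b = 0 \<and> c = a then 1 else 0) + (if c = 0 \<and> b = a then 1 else 0)) / (A (y 0))^2)"
proof -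
  have "christ N (frw N A) a b c y = ginv N (frw N A) y a a *
      (pd (\<lambda>y. frw N A y a c) b y + pd (\<lambda>y. frw N A y a b) c y - pd (\<lambda>y. frw N A y b c) a y) / 2"
    unfolding christ_def using assms
    by (subst sum_diagonal_mult) (auto simp: ginv_frw frw_inv_def)
  then show ?thesis
    using assms by (cases "a = 0") (simp_all add: ginv_frw frw_inv_def pd_frw)
qed


section \<open>De Sitter space\<close>

lemma pd_time_only: "pd (\<lambda>y. F (y 0)) i x = (if i = 0 then deriv F (x 0) else 0)"
  unfolding pd_def by auto

lemma deriv_exp_scale_sq: "deriv (\<lambda>t. (a0 * exp (C * t))^2) t = 2 * C * (a0 * exp (C * t))^2"
  by (rule DERIV_imp_deriv) (auto intro!: derivative_eq_intros simp: power2_eq_square algebra_simps)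

context
  fixes N :: nat and a0 C :: real
  assumes a0: "a0 \<noteq> 0"
begin

abbreviation de_sitter :: metric where
  "de_sitter \<equiv> frw N (\<lambda>t. a0 * exp (C * t))"

definition christ_dS :: "nat \<Rightarrow> nat \<Rightarrow> nat \<Rightarrow> real \<Rightarrow> real" where
  "christ_dS a b c t = (if a = 0 then (if b = c \<and> b \<noteq> 0 then C * (a0 * exp (C * t))^2 else 0)
     else (if b = 0 \<and> c = a then C else 0) + (if c = 0 \<and> b = a then C else 0))"

lemma christ_de_sitter:
  assumes "a < N" "b < N" "c < N"
  shows "christ N de_sitter a b c y = christ_dS a b c (y 0)"
  using christ_frw[where A = "\<lambda>t. a0 * exp (C * t)"] assms a0
  unfolding deriv_exp_scale_sq by (cases "a = 0") (simp_all add: christ_dS_def field_simps)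

lemma deriv_christ_dS:
  "deriv (christ_dS a b d) t = (if a = 0 \<and> b = d \<and> b \<noteq> 0 then 2 * C^2 * (a0 * exp (C * t))^2 else 0)"
proof (cases "a = 0 \<and> b = d \<and> b \<noteq> 0")
  case True
  then have "christ_dS a b d = (\<lambda>t. C * (a0 * exp (C * t))^2)"
    by (auto simp: christ_dS_def)
  then show ?thesis
    using True
    by (simp, intro DERIV_imp_deriv) (auto intro!: derivative_eq_intros simp: power2_eq_square algebra_simps)
next
  case False
  then have "christ_dS a b d
      = (\<lambda>t. if a = 0 then 0 else (if b = 0 \<and> d = a then C else 0) + (if d = 0 \<and> b = a then C else 0))"
    by (auto simp: christ_dS_def)
  then show ?thesis
    using False by auto
qed

lemma pd_christ_de_sitter:
  assumes "a < N" "b < N" "d < N"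
  shows "pd (\<lambda>y. christ N de_sitter a b d y) c x
    = (if c = 0 \<and> a = 0 \<and> b = d \<and> b \<noteq> 0 then 2 * C^2 * (a0 * exp (C * x 0))^2 else 0)"
proof -
  have "(\<lambda>y. christ N de_sitter a b d y) = (\<lambda>y. christ_dS a b d (y 0))"
    using assms by (simp add: christ_de_sitter)
  then show ?thesis
    by (simp add: pd_time_only deriv_christ_dS)
qed

lemma sum_christ_dS_mult:
  assumes "a < N" "c < N"
  shows "(\<Sum>f<N. christ_dS a f c t * X f) = (if a = 0 then (if c \<noteq> 0 then C * (a0 * exp (C * t))^2 * X c else 0)
      else (if c = a then C * X 0 else 0) + (if c = 0 then C * X a else 0))"
proof (cases "a = 0")
  case True
  have "(\<Sum>f<N. christ_dS a f c t * X f)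
      = (\<Sum>f<N. if f = c then (if c \<noteq> 0 then C * (a0 * exp (C * t))^2 * X c else 0) else 0)"
    by (intro sum.cong refl) (auto simp: christ_dS_def True)
  then show ?thesis
    using assms True by simp
next
  case False
  have "(\<Sum>f<N. christ_dS a f c t * X f) = (\<Sum>f<N. (if f = 0 then (if c = a then C * X 0 else 0) else 0)
      + (if f = a then (if c = 0 then C * X a else 0) else 0))"
    by (intro sum.cong refl) (auto simp: christ_dS_def False algebra_simps)
  then show ?thesis
    using assms False by (simp add: sum.distrib)
qed

lemma riem_de_sitter:
  assumes "a < N" "b < N" "c < N" "d < N"
  shows "riem N de_sitter a b c d x
    = C^2 * ((if a = c then de_sitter x b d else 0) - (if a = d then de_sitter x b c else 0))"
proof -
  let ?S = "(a0 * exp (C * x 0))^2" and ?G = "\<lambda>a b c. christ_dS a b c (x 0)"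
  have christ_products: "(\<Sum>f<N. christ N de_sitter a f c x * christ N de_sitter f b d x
      - christ N de_sitter a f d x * christ N de_sitter f b c x)
     = (\<Sum>f<N. ?G a f c * ?G f b d) - (\<Sum>f<N. ?G a f d * ?G f b c)"
    unfolding sum_subtractf[symmetric] using assms
    by (intro sum.cong refl) (simp add: christ_de_sitter)
  have "riem N de_sitter a b c d x
     = (if c = 0 \<and> a = 0 \<and> b = d \<and> b \<noteq> 0 then 2 * C^2 * ?S else 0)
     - (if d = 0 \<and> a = 0 \<and> b = c \<and> b \<noteq> 0 then 2 * C^2 * ?S else 0)
     + ((if a = 0 then (if c \<noteq> 0 then C * ?S * ?G c b d else 0)
         else (if c = a then C * ?G 0 b d else 0) + (if c = 0 then C * ?G a b d else 0))
      - (if a = 0 then (if d \<noteq> 0 then C * ?S * ?G d b c else 0)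
         else (if d = a then C * ?G 0 b c else 0) + (if d = 0 then C * ?G a b c else 0)))"
    unfolding riem_def christ_products using assms
    by (simp only: pd_christ_de_sitter sum_christ_dS_mult)
  also have "\<dots> = C^2 * ((if a = c then de_sitter x b d else 0) - (if a = d then de_sitter x b c else 0))"
    using assms by (cases "a = 0") (auto simp: christ_dS_def frw_def algebra_simps power2_eq_square)
  finally show ?thesis .
qed

lemma riem_low_de_sitter:
  assumes "a < N" "b < N" "c < N" "d < N"
  shows "riem_low N de_sitter a b c d x
    = C^2 * (de_sitter x a c * de_sitter x b d - de_sitter x a d * de_sitter x b c)"
proof -
  have "riem_low N de_sitter a b c d x = de_sitter x a a * riem N de_sitter a b c d x"
    unfolding riem_low_def using assms by (subst sum_diagonal_mult) (auto simp: frw_def)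
  also have "\<dots> = C^2 * (de_sitter x a c * de_sitter x b d - de_sitter x a d * de_sitter x b c)"
    using assms by (simp only: riem_de_sitter) (auto simp: frw_def algebra_simps)
  finally show ?thesis .
qed

lemma constant_curvature_at_de_sitter: "constant_curvature_at N de_sitter x (C^2)"
proof
  have A: "a0 * exp (C * x 0) \<noteq> 0" using a0 by simp
  show "(\<Sum>c<N. de_sitter x a c * ginv N de_sitter x c b) = (if a = b then 1 else 0)"
    and "(\<Sum>c<N. ginv N de_sitter x a c * de_sitter x c b) = (if a = b then 1 else 0)"
    if "a < N" "b < N" for a b
    using that A by (simp_all add: ginv_frw frw_mult_frw_inv frw_inv_mult_frw)
qed (simp_all add: frw_symmetric riem_low_de_sitter)

lemma lovH_mixed_de_sitter:
  assumes "1 \<le> i" "2*i \<le> N" "a < N" "b < N"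
  shows "lovH_mixed N de_sitter i a b x = k21 N i * C^(2*i) * (if a = b then 1 else 0)"
proof -
  interpret constant_curvature_at N de_sitter x "C^2"
    by (rule constant_curvature_at_de_sitter)
  obtain k where i: "i = Suc k"
    using assms(1) by (cases i) auto
  have "lovH_mixed N de_sitter i a b x = (C^2)^i
      * (real (falling_fact (N - 2) (2*k)) * (real N - 1) * (real (Suc k) - real N / 2))
      * (if a = b then 1 else 0)"
    unfolding i by (simp only: lovH_mixed_eq[OF assms(3,4)] mult.assoc)
  then show ?thesis
    using lovelock_coeff_eq_k21[of k N] assms(2) by (simp add: i power_mult power2_eq_square)
qed

end


theorem theorem1:
  fixes n N :: nat and \<alpha> :: "nat \<Rightarrow> real" and C a0 :: real
  assumes "n \<ge> 2" and "N \<ge> 2*n+1"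
    and root: "(1/2) * (real N - 2) * (real N - 1) * C\<^sup>2
               - (\<Sum>i=2..n. \<alpha> i * k21 N i * C ^ (2*i)) = 0"
    and "a0 > 0"
  shows "\<forall>x a b. a < N \<longrightarrow> b < N \<longrightarrow>
           lovH_mixed N (frw N (\<lambda>t. a0 * exp (C * t))) 1 a b x
           + (\<Sum>i=2..n. \<alpha> i * lovH_mixed N (frw N (\<lambda>t. a0 * exp (C * t))) i a b x) = 0"
proof (intro allI impI)
  fix x a b assume a: "a < N" and b: "b < N"
  let ?G = "frw N (\<lambda>t. a0 * exp (C * t))"
  have H: "lovH_mixed N ?G i a b x = k21 N i * C^(2*i) * (if a = b then 1 else 0)"
    if "1 \<le> i" "2*i \<le> N" for i
    using lovH_mixed_de_sitter[of a0 i N a b] \<open>a0 > 0\<close> that a b by simp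
  have "lovH_mixed N ?G 1 a b x + (\<Sum>i=2..n. \<alpha> i * lovH_mixed N ?G i a b x)
      = (k21 N 1 * C^2 + (\<Sum>i=2..n. \<alpha> i * k21 N i * C^(2*i))) * (if a = b then 1 else 0)"
    using assms H by (simp add: distrib_right sum_distrib_right mult.assoc)
  also have "k21 N 1 * C^2 + (\<Sum>i=2..n. \<alpha> i * k21 N i * C^(2*i))
      = - ((1/2) * (real N - 2) * (real N - 1) * C\<^sup>2 - (\<Sum>i=2..n. \<alpha> i * k21 N i * C ^ (2*i)))"
    by (simp add: k21_def)
  also note root
  finally show "lovH_mixed N ?G 1 a b x + (\<Sum>i=2..n. \<alpha> i * lovH_mixed N ?G i a b x) = 0"
    by simp
qed

end
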